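(* Consider the model described in the context, and let $\lambda_s\in\mathbb{R}$ and $(\underline{\boldsymbol\mu}_s,\bar{\boldsymbol\mu}_s)\in\mathbb{R}_+^{L}\times\mathbb{R}_+^{L}$, $s\in S$, be any Lagrange multipliers associated with the supply-demand balance constraints and the line flow constraints, respectively, in $SYSTEM$. Let $\boldsymbol\delta\in\mathbb{R}^N$ be the constant appearing in $ED(\mathbf{d}_1)$. (a) If for each $n\in N$ $$\delta_n=\sum_{s\in S}p_s\big(\pi_n(\lambda_s,\underline{\boldsymbol\mu}_s,\bar{\boldsymbol\mu}_s)-\pi_n(\lambda_1,\underline{\boldsymbol\mu}_1,\bar{\boldsymbol\mu}_1)\big),\qquad(\ast)$$ then $SYSTEM$ can be optimally decomposed into $ED$-$FR$. (b) If $SYSTEM$ can be optimally decomposed into $ED$-$FR$, then, letting $(\mathbf{q}^b,\mathbf{q}^p,\mathbf{r}^p)$ be an optimal solution of $SYSTEM$ and $q^p_{1,n}:=q^p_n+r^p_{1,n}=q^p_n$, the identity $(\ast)$ holds for every $n\in N$ such that $\underline{q}_n^b<q_n^b<\bar{q}_n^b$ and $\underline{q}_n^p<q_{1,n}^p<\bar{q}_n^p$.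
   Context: Network: a connected directed graph with finite node set $N$ (also writing $N$ for its cardinality) and link set $L$; $\mathbf{C}\in\mathbb{R}^{N\times L}$ is its incidence matrix, $\mathbf{B}=\mathrm{diag}(B_l,l\in L)$ with $B_l>0$, $\mathbf{L}=\mathbf{C}\mathbf{B}\mathbf{C}^\top$, $\mathbf{H}=\mathbf{B}\mathbf{C}^\top\mathbf{L}^\dagger$ ($\dagger$ = Moore–Penrose pseudo-inverse), and $\mathbf{f}\in\mathbb{R}^L$ are line capacities. $\mathbf{1}$ is the all-ones vector in $\mathbb{R}^N$. Time/uncertainty: there are $K$ periods $1,\dots,K$ and a finite set $S$ of demand outcomes (a scenario tree); each $s\in S$ has a period $\kappa(s)\in\{1,\dots,K\}$, a probability $p_s$ conditioned on the period, with $\sum_{\{s:\kappa(s)=k\}}p_s=1$ for each $k$, and a demand vector $\mathbf{d}_s\in\mathbb{R}^N$. There is an outcome labeled $1\in S$ with $\kappa(1)=1$ and $p_1=1$. Generators: each node $n$ has a dispatch generator producing $q_n^b$ in all outcomes, with capacity $[\underline{q}_n^b,\bar{q}_n^b]$ and cost $c_n^b:[\underline{q}_n^b,\bar{q}_n^b]\to\mathbb{R}_+$, and a regulation generator producing $q_n^p+r_{s,n}^p$ in outcome $s$ (with $r^p_{1,n}:=0$), with capacity $[\underline{q}_n^p,\bar{q}_n^p]$ and cost $c_n^p:[\underline{q}_n^p,\bar{q}_n^p]\to\mathbb{R}_+$; all cost functions are strictly convex and continuously differentiable. Vectors: $\mathbf{q}^b=(q^b_n)$, $\mathbf{q}^p=(q^p_n)$,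 $\mathbf{r}^p_s=(r^p_{s,n})$, $\mathbf{r}^p=(\mathbf{r}^p_s,s\in S)$, and similarly for the bounds. Feasible set: $\Omega(\mathbf{d}_s)$ is the set of $(\mathbf{q}^b,\mathbf{q}^p,\mathbf{r}^p_s)$ with $\underline{\mathbf{q}}^b\le\mathbf{q}^b\le\bar{\mathbf{q}}^b$, $\underline{\mathbf{q}}^p\le\mathbf{q}^p+\mathbf{r}^p_s\le\bar{\mathbf{q}}^p$, $\mathbf{1}^\top(\mathbf{q}^b+\mathbf{q}^p+\mathbf{r}^p_s-\mathbf{d}_s)=0$ (balance constraint), and $-\mathbf{f}\le\mathbf{H}(\mathbf{q}^b+\mathbf{q}^p+\mathbf{r}^p_s-\mathbf{d}_s)\le\mathbf{f}$ (line flow constraint). $SYSTEM$: minimize $\sum_{s\in S}p_s\sum_{n\in N}\big(c_n^b(q_n^b)+c_n^p(q_n^p+r^p_{s,n})\big)$ over $(\mathbf{q}^b,\mathbf{q}^p,\mathbf{r}^p)$ subject to $(\mathbf{q}^b,\mathbf{q}^p,\mathbf{r}^p_s)\in\Omega(\mathbf{d}_s)$ for all $s\in S$ and $\mathbf{r}^p_1=\mathbf{0}$; this problem is assumed feasible. Lagrange multipliers are with respect to the Lagrangian in which the constraints of outcome $s$ are weighted by $p_s$: the balance constraint enters as $-p_s\lambda_s\mathbf{1}^\top(\mathbf{q}^b+\mathbf{q}^p+\mathbf{r}^p_s-\mathbf{d}_s)$ and the line constraints as $p_s\underline{\boldsymbol\mu}_s^\top(-\mathbf{f}-\mathbf{H}(\cdot))+p_s\bar{\boldsymbol\mu}_s^\top(\mathbf{H}(\cdot)-\mathbf{f})$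 with $\underline{\boldsymbol\mu}_s,\bar{\boldsymbol\mu}_s\ge0$ (regulation capacity constraints likewise weighted by $p_s$). Nodal prices: $\boldsymbol\pi(\lambda,\underline{\boldsymbol\mu},\bar{\boldsymbol\mu}):=\lambda\mathbf{1}+\mathbf{H}^\top(\underline{\boldsymbol\mu}-\bar{\boldsymbol\mu})\in\mathbb{R}^N$, with components $\pi_n$. Sub-problems: for a constant $\boldsymbol\delta\in\mathbb{R}^N$, $ED(\mathbf{d}_1)$: minimize $\sum_{n}\big(Kc_n^b(q_n^b)+Kc_n^p(q_n^p)-\delta_nq_n^b\big)$ over $(\mathbf{q}^b,\mathbf{q}^p)$ subject to $(\mathbf{q}^b,\mathbf{q}^p,\mathbf{0})\in\Omega(\mathbf{d}_1)$. $FR(\mathbf{q}^b,\mathbf{q}^p,\mathbf{d}_s)$: minimize $\sum_n c_n^p(q_n^p+r^p_{s,n})$ over $\mathbf{r}^p_s$ subject to $(\mathbf{q}^b,\mathbf{q}^p,\mathbf{r}^p_s)\in\Omega(\mathbf{d}_s)$. Definition: $SYSTEM$ can be optimally decomposed into $ED$-$FR$ if $(\mathbf{q}^b,\mathbf{q}^p,\mathbf{r}^p)$ is an optimal solution of $SYSTEM$ if and only if $\mathbf{r}^p_1=\mathbf{0}$, $(\mathbf{q}^b,\mathbf{q}^p)$ is an optimal solution of $ED(\mathbf{d}_1)$, and $\mathbf{r}^p_s$ is an optimal solution of $FR(\mathbf{q}^b,\mathbf{q}^p,\mathbf{d}_s)$ for all $s\in S$. *)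

theory Defs
  imports "HOL-Analysis.Analysis"
begin

definition strict_convex_on :: "real set \<Rightarrow> (real \<Rightarrow> real) \<Rightarrow> bool" where
  "strict_convex_on S f \<longleftrightarrow> convex S \<and>
    (\<forall>x\<in>S. \<forall>y\<in>S. \<forall>u>0. \<forall>v>0. u + v = 1 \<longrightarrow> x \<noteq> y \<longrightarrow>
        f (u * x + v * y) < u * f x + v * f y)"

definition C1_on_interval :: "real \<Rightarrow> real \<Rightarrow> (real \<Rightarrow> real) \<Rightarrow> bool" where
  "C1_on_interval lo hi c \<longleftrightarrow>
    (\<exists>c'. (\<forall>x\<in>{lo..hi}. (c has_real_derivative c' x) (at x within {lo..hi}))
          \<and> continuous_on {lo..hi} c')"

definition is_opt :: "'a set \<Rightarrow> ('a \<Rightarrow> real) \<Rightarrow> 'a \<Rightarrow> bool" where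
  "is_opt F f x \<longleftrightarrow> x \<in> F \<and> (\<forall>y\<in>F. f x \<le> f y)"

definition mp_pinv :: "real^'m::finite^'k::finite \<Rightarrow> real^'k::finite^'m::finite" where
  "mp_pinv A = (THE X. A ** X ** A = A \<and> X ** A ** X = X \<and>
                       transpose (A ** X) = A ** X \<and> transpose (X ** A) = X ** A)"

definition incidence :: "('l::finite \<Rightarrow> 'n::finite) \<Rightarrow> ('l::finite \<Rightarrow> 'n::finite) \<Rightarrow> real^'l::finite^'n::finite" where
  "incidence src dst = (\<chi> n l. if n = src l then 1 else if n = dst l then -1 else 0)"

definition connected_digraph :: "('l::finite \<Rightarrow> 'n::finite) \<Rightarrow> ('l::finite \<Rightarrow> 'n::finite) \<Rightarrow> bool" where
  "connected_digraph src dst \<longleftrightarrow>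
     (\<forall>l. src l \<noteq> dst l) \<and>
     (\<forall>a b. (a, b) \<in> ({(src l, dst l) | l. True} \<union> {(dst l, src l) | l. True})\<^sup>*)"

definition diag_mat :: "('l::finite \<Rightarrow> real) \<Rightarrow> real^'l::finite^'l::finite" where
  "diag_mat B = (\<chi> i j. if i = j then B i else 0)"

definition lap_mat :: "('l::finite \<Rightarrow> 'n::finite) \<Rightarrow> ('l::finite \<Rightarrow> 'n::finite) \<Rightarrow> ('l::finite \<Rightarrow> real) \<Rightarrow> real^'n::finite^'n::finite" where
  "lap_mat src dst B = incidence src dst ** diag_mat B ** transpose (incidence src dst)"

definition ptdf :: "('l::finite \<Rightarrow> 'n::finite) \<Rightarrow> ('l::finite \<Rightarrow> 'n::finite) \<Rightarrow> ('l::finite \<Rightarrow> real) \<Rightarrow> real^'n::finite^'l::finite" where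
  "ptdf src dst B = diag_mat B ** transpose (incidence src dst) ** mp_pinv (lap_mat src dst B)"

definition Omega ::
  "real^'n::finite^'l::finite \<Rightarrow> real^'l::finite \<Rightarrow> real^'n::finite \<Rightarrow> real^'n::finite \<Rightarrow> real^'n::finite \<Rightarrow> real^'n::finite \<Rightarrow> real^'n::finite
   \<Rightarrow> ((real^'n::finite) \<times> (real^'n::finite) \<times> (real^'n::finite)) set" where
  "Omega H f qlb qub qlp qup d =
     {(qb, qp, r).
        (\<forall>n. qlb$n \<le> qb$n \<and> qb$n \<le> qub$n) \<and>
        (\<forall>n. qlp$n \<le> qp$n + r$n \<and> qp$n + r$n \<le> qup$n) \<and>
        (\<Sum>n\<in>UNIV. (qb + qp + r - d)$n) = 0 \<and>
        (\<forall>l. - f$l \<le> (H *v (qb + qp + r - d))$l \<and> (H *v (qb + qp + r - d))$l \<le> f$l)}"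

definition sys_obj ::
  "('s::finite \<Rightarrow> real) \<Rightarrow> ('n::finite \<Rightarrow> real \<Rightarrow> real) \<Rightarrow> ('n::finite \<Rightarrow> real \<Rightarrow> real)
   \<Rightarrow> (real^'n::finite) \<times> (real^'n::finite) \<times> ('s::finite \<Rightarrow> real^'n::finite) \<Rightarrow> real" where
  "sys_obj p cb cp x = (case x of (qb, qp, r) \<Rightarrow>
     (\<Sum>s\<in>UNIV. p s * (\<Sum>n\<in>UNIV. cb n (qb$n) + cp n (qp$n + r s$n))))"

text \<open>Feasible set of SYSTEM; o1 is the outcome labelled 1.\<close>
definition sys_feas ::
  "real^'n::finite^'l::finite \<Rightarrow> real^'l::finite \<Rightarrow> real^'n::finite \<Rightarrow> real^'n::finite \<Rightarrow> real^'n::finite \<Rightarrow> real^'n::finite \<Rightarrow> ('s::finite \<Rightarrow> real^'n::finite) \<Rightarrow> 's::finite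
   \<Rightarrow> ((real^'n::finite) \<times> (real^'n::finite) \<times> ('s::finite \<Rightarrow> real^'n::finite)) set" where
  "sys_feas H f qlb qub qlp qup d o1 =
     {(qb, qp, r). r o1 = 0 \<and> (\<forall>s. (qb, qp, r s) \<in> Omega H f qlb qub qlp qup (d s))}"

text \<open>Set over which the partial Lagrangian is minimised: the constraints that are not
  dualised via lambda, mu (generator capacities and r^p_1 = 0).\<close>
definition sys_box ::
  "real^'n::finite \<Rightarrow> real^'n::finite \<Rightarrow> real^'n::finite \<Rightarrow> real^'n::finite \<Rightarrow> 's::finite
   \<Rightarrow> ((real^'n::finite) \<times> (real^'n::finite) \<times> ('s::finite \<Rightarrow> real^'n::finite)) set" where
  "sys_box qlb qub qlp qup o1 =
     {(qb, qp, r). r o1 = 0 \<and> (\<forall>n. qlb$n \<le> qb$n \<and> qb$n \<le> qub$n) \<and>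
        (\<forall>s n. qlp$n \<le> qp$n + r s$n \<and> qp$n + r s$n \<le> qup$n)}"

definition sys_lagr ::
  "real^'n::finite^'l::finite \<Rightarrow> real^'l::finite \<Rightarrow> ('s::finite \<Rightarrow> real) \<Rightarrow> ('n::finite \<Rightarrow> real \<Rightarrow> real) \<Rightarrow> ('n::finite \<Rightarrow> real \<Rightarrow> real)
   \<Rightarrow> ('s::finite \<Rightarrow> real^'n::finite) \<Rightarrow> ('s::finite \<Rightarrow> real) \<Rightarrow> ('s::finite \<Rightarrow> real^'l::finite) \<Rightarrow> ('s::finite \<Rightarrow> real^'l::finite)
   \<Rightarrow> (real^'n::finite) \<times> (real^'n::finite) \<times> ('s::finite \<Rightarrow> real^'n::finite) \<Rightarrow> real" where
  "sys_lagr H f p cb cp d lam mul muu x = (case x of (qb, qp, r) \<Rightarrow>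
     sys_obj p cb cp x +
     (\<Sum>s\<in>UNIV. let z = qb + qp + r s - d s in
        - p s * lam s * (\<Sum>n\<in>UNIV. z$n)
        + p s * (\<Sum>l\<in>UNIV. mul s $ l * (- f$l - (H *v z)$l))
        + p s * (\<Sum>l\<in>UNIV. muu s $ l * ((H *v z)$l - f$l))))"

text \<open>(lam, mul, muu) are Lagrange multipliers of SYSTEM for the balance and line-flow
  constraints: nonnegativity of the inequality multipliers, and no duality gap, i.e. the
  infimum of the Lagrangian over the remaining constraint set equals the optimal value.\<close>
definition sys_lagrange_mult ::
  "real^'n::finite^'l::finite \<Rightarrow> real^'l::finite \<Rightarrow> real^'n::finite \<Rightarrow> real^'n::finite \<Rightarrow> real^'n::finite \<Rightarrow> real^'n::finite
   \<Rightarrow> ('s::finite \<Rightarrow> real) \<Rightarrow> ('n::finite \<Rightarrow> real \<Rightarrow> real) \<Rightarrow> ('n::finite \<Rightarrow> real \<Rightarrow> real) \<Rightarrow> ('s::finite \<Rightarrow> real^'n::finite) \<Rightarrow> 's::finite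
   \<Rightarrow> ('s::finite \<Rightarrow> real) \<Rightarrow> ('s::finite \<Rightarrow> real^'l::finite) \<Rightarrow> ('s::finite \<Rightarrow> real^'l::finite) \<Rightarrow> bool" where
  "sys_lagrange_mult H f qlb qub qlp qup p cb cp d o1 lam mul muu \<longleftrightarrow>
     (\<forall>s l. 0 \<le> mul s $ l \<and> 0 \<le> muu s $ l) \<and>
     (INF x\<in>sys_box qlb qub qlp qup o1. sys_lagr H f p cb cp d lam mul muu x)
       = (INF x\<in>sys_feas H f qlb qub qlp qup d o1. sys_obj p cb cp x)"

definition nodal_price :: "real^'n::finite^'l::finite \<Rightarrow> real \<Rightarrow> real^'l::finite \<Rightarrow> real^'l::finite \<Rightarrow> real^'n::finite" where
  "nodal_price H lam mul muu = (\<chi> n. lam + (transpose H *v (mul - muu))$n)"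

definition ed_obj ::
  "nat \<Rightarrow> real^'n::finite \<Rightarrow> ('n::finite \<Rightarrow> real \<Rightarrow> real) \<Rightarrow> ('n::finite \<Rightarrow> real \<Rightarrow> real)
   \<Rightarrow> (real^'n::finite) \<times> (real^'n::finite) \<Rightarrow> real" where
  "ed_obj K \<delta> cb cp x = (case x of (qb, qp) \<Rightarrow>
     (\<Sum>n\<in>UNIV. real K * cb n (qb$n) + real K * cp n (qp$n) - \<delta>$n * qb$n))"

definition ed_feas ::
  "real^'n::finite^'l::finite \<Rightarrow> real^'l::finite \<Rightarrow> real^'n::finite \<Rightarrow> real^'n::finite \<Rightarrow> real^'n::finite \<Rightarrow> real^'n::finite \<Rightarrow> real^'n::finite
   \<Rightarrow> ((real^'n::finite) \<times> (real^'n::finite)) set" where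
  "ed_feas H f qlb qub qlp qup d1 = {(qb, qp). (qb, qp, 0) \<in> Omega H f qlb qub qlp qup d1}"

definition fr_obj :: "('n::finite \<Rightarrow> real \<Rightarrow> real) \<Rightarrow> real^'n::finite \<Rightarrow> real^'n::finite \<Rightarrow> real" where
  "fr_obj cp qp r = (\<Sum>n\<in>UNIV. cp n (qp$n + r$n))"

definition fr_feas ::
  "real^'n::finite^'l::finite \<Rightarrow> real^'l::finite \<Rightarrow> real^'n::finite \<Rightarrow> real^'n::finite \<Rightarrow> real^'n::finite \<Rightarrow> real^'n::finite
   \<Rightarrow> real^'n::finite \<Rightarrow> real^'n::finite \<Rightarrow> real^'n::finite \<Rightarrow> (real^'n::finite) set" where
  "fr_feas H f qlb qub qlp qup qb qp ds = {r. (qb, qp, r) \<in> Omega H f qlb qub qlp qup ds}"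

definition ed_fr_decomposable ::
  "real^'n::finite^'l::finite \<Rightarrow> real^'l::finite \<Rightarrow> real^'n::finite \<Rightarrow> real^'n::finite \<Rightarrow> real^'n::finite \<Rightarrow> real^'n::finite
   \<Rightarrow> nat \<Rightarrow> ('s::finite \<Rightarrow> real) \<Rightarrow> ('n::finite \<Rightarrow> real \<Rightarrow> real) \<Rightarrow> ('n::finite \<Rightarrow> real \<Rightarrow> real) \<Rightarrow> ('s::finite \<Rightarrow> real^'n::finite) \<Rightarrow> 's::finite
   \<Rightarrow> real^'n::finite \<Rightarrow> bool" where
  "ed_fr_decomposable H f qlb qub qlp qup K p cb cp d o1 \<delta> \<longleftrightarrow>
     (\<forall>qb qp r.
        is_opt (sys_feas H f qlb qub qlp qup d o1) (sys_obj p cb cp) (qb, qp, r)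
        \<longleftrightarrow> (r o1 = 0 \<and>
             is_opt (ed_feas H f qlb qub qlp qup (d o1)) (ed_obj K \<delta> cb cp) (qb, qp) \<and>
             (\<forall>s. is_opt (fr_feas H f qlb qub qlp qup qb qp (d s)) (fr_obj cp qp) (r s))))"

end

theory Submission
  imports Defs
begin

text \<open>Write \<open>\<pi>\<^sub>s\<close> for the nodal prices of the multipliers and \<open>z\<^sub>s\<close> for the net injections.
  The Lagrangian of SYSTEM is its cost minus the \<open>p\<^sub>s\<close>-weighted slacks \<open>\<pi>\<^sub>s\<cdot>z\<^sub>s\<close> plus line rents,
  which are nonnegative at feasible points, and it separates into a dispatch part
  \<open>K c\<^sup>b(q\<^sup>b) - (\<Sum>\<^sub>s p\<^sub>s \<pi>\<^sub>s)\<cdot>q\<^sup>b\<close> and, per outcome, a regulation part \<open>c\<^sup>p(y) - \<pi>\<^sub>s\<cdot>y\<close> in the regulation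
  output \<open>y = q\<^sup>p + r\<^sub>s\<close>. Without duality gap, an optimum of SYSTEM (which exists by compactness)
  minimises the Lagrangian over the capacity box and has zero slack in every outcome.
  Under the price condition the ED objective is, up to a constant, the dispatch part plus \<open>K\<close> times
  the outcome-1 regulation part and slack, and the FR objective is the regulation part plus the
  slack; so the optimum of SYSTEM solves ED and FR. Strict convexity makes the optima of ED and
  FR unique, which gives the converse. For (b), at an interior optimum the first-order conditions
  of the dispatch part, of the outcome-1 regulation part and of ED at node \<open>n\<close> combine to the
  price condition.\<close>

lemma sum_transpose_mult:
  fixes H :: "real^'n::finite^'l::finite"
  shows "(\<Sum>n\<in>UNIV. (transpose H *v w)$n * z$n) = (\<Sum>l\<in>UNIV. w$l * (H *v z)$l)"
  using dot_lmul_matrix[of w H z] by (simp add: inner_vec_def)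

lemma multiplier_terms_eq:
  fixes H :: "real^'n::finite^'l::finite"
  shows "- lam * (\<Sum>n\<in>UNIV. z$n) + (\<Sum>l\<in>UNIV. mul$l * (- f$l - (H *v z)$l))
           + (\<Sum>l\<in>UNIV. muu$l * ((H *v z)$l - f$l))
     = - ((\<Sum>n\<in>UNIV. nodal_price H lam mul muu $ n * z$n) + (\<Sum>l\<in>UNIV. (mul$l + muu$l) * f$l))"
proof -
  have "(\<Sum>n\<in>UNIV. nodal_price H lam mul muu $ n * z$n)
      = lam * (\<Sum>n\<in>UNIV. z$n) + (\<Sum>n\<in>UNIV. (transpose H *v (mul - muu))$n * z$n)"
    by (simp add: nodal_price_def distrib_right sum.distrib sum_distrib_left)
  also have "\<dots> = lam * (\<Sum>n\<in>UNIV. z$n) + (\<Sum>l\<in>UNIV. (mul - muu)$l * (H *v z)$l)"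
    by (simp only: sum_transpose_mult)
  finally have price: "(\<Sum>n\<in>UNIV. nodal_price H lam mul muu $ n * z$n)
      = lam * (\<Sum>n\<in>UNIV. z$n) + (\<Sum>l\<in>UNIV. (mul - muu)$l * (H *v z)$l)" .
  have lines: "(\<Sum>l\<in>UNIV. mul$l * (- f$l - (H *v z)$l)) + (\<Sum>l\<in>UNIV. muu$l * ((H *v z)$l - f$l))
     = - (\<Sum>l\<in>UNIV. (mul - muu)$l * (H *v z)$l) - (\<Sum>l\<in>UNIV. (mul$l + muu$l) * f$l)"
    unfolding sum_negf[symmetric] sum.distrib[symmetric] sum_subtractf[symmetric]
    by (rule sum.cong) (auto simp: algebra_simps)
  show ?thesis using price lines by linarith
qed

lemma sum_replace_term:
  fixes h :: "'s::finite \<Rightarrow> 'a \<Rightarrow> real"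
  shows "(\<Sum>t\<in>UNIV. h t (if t = s then w else v t)) = (\<Sum>t\<in>UNIV. h t (v t)) - h s (v s) + h s w"
proof -
  have "(\<Sum>t\<in>UNIV. h t (if t = s then w else v t)) = h s w + (\<Sum>t\<in>UNIV - {s}. h t (v t))"
    by (subst sum.remove[of UNIV s]) (auto intro: sum.cong)
  also have "(\<Sum>t\<in>UNIV - {s}. h t (v t)) = (\<Sum>t\<in>UNIV. h t (v t)) - h s (v s)"
    by (subst sum.remove[of UNIV s]) auto
  finally show ?thesis by simp
qed

lemma midpoint_vec_nth [simp]: "midpoint u v $ n = (u$n + v$n) / (2::real)"
  by (simp add: midpoint_def)

lemma strict_convex_on_mean_less:
  assumes "strict_convex_on S c" "x \<in> S" "y \<in> S" "x \<noteq> y"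
  shows "c ((x + y) / 2) < (c x + c y) / 2"
proof -
  have "\<forall>u>0. \<forall>v>0. u + v = 1 \<longrightarrow> x \<noteq> y \<longrightarrow> c (u * x + v * y) < u * c x + v * c y"
    using assms(1-3) unfolding strict_convex_on_def by blast
  from this[rule_format, of "1/2" "1/2"] have "c ((1/2) * x + (1/2) * y) < (1/2) * c x + (1/2) * c y"
    using assms(4) by simp
  then show ?thesis by (simp add: field_simps)
qed

lemma strict_convex_on_mean_le:
  assumes "strict_convex_on S c" "x \<in> S" "y \<in> S"
  shows "c ((x + y) / 2) \<le> (c x + c y) / 2"
  using strict_convex_on_mean_less[OF assms] by (cases "x = y") auto

lemma sum_strict_convex_midpoint:
  fixes u v :: "real^'n::finite"
  assumes "\<And>n. strict_convex_on (I n) (c n)" "\<And>n. u$n \<in> I n" "\<And>n. v$n \<in> I n"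
  shows sum_strict_convex_midpoint_le:
      "(\<Sum>n\<in>UNIV. c n (midpoint u v $ n)) \<le> ((\<Sum>n\<in>UNIV. c n (u$n)) + (\<Sum>n\<in>UNIV. c n (v$n))) / 2"
    and sum_strict_convex_midpoint_less: "u \<noteq> v \<Longrightarrow>
      (\<Sum>n\<in>UNIV. c n (midpoint u v $ n)) < ((\<Sum>n\<in>UNIV. c n (u$n)) + (\<Sum>n\<in>UNIV. c n (v$n))) / 2"
proof -
  have mean: "((\<Sum>n\<in>UNIV. c n (u$n)) + (\<Sum>n\<in>UNIV. c n (v$n))) / 2 = (\<Sum>n\<in>UNIV. (c n (u$n) + c n (v$n)) / 2)"
    by (simp only: sum_divide_distrib[symmetric] sum.distrib)
  have le: "c n (midpoint u v $ n) \<le> (c n (u$n) + c n (v$n)) / 2" for n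
    using strict_convex_on_mean_le[OF assms] by simp
  then show "(\<Sum>n\<in>UNIV. c n (midpoint u v $ n)) \<le> ((\<Sum>n\<in>UNIV. c n (u$n)) + (\<Sum>n\<in>UNIV. c n (v$n))) / 2"
    unfolding mean by (rule sum_mono)
  assume "u \<noteq> v"
  then obtain n where "u$n \<noteq> v$n" by (auto simp: vec_eq_iff)
  then have "c n (midpoint u v $ n) < (c n (u$n) + c n (v$n)) / 2"
    using strict_convex_on_mean_less[OF assms] by simp
  then show "(\<Sum>n\<in>UNIV. c n (midpoint u v $ n)) < ((\<Sum>n\<in>UNIV. c n (u$n)) + (\<Sum>n\<in>UNIV. c n (v$n))) / 2"
    unfolding mean using le by (intro sum_strict_mono_ex1) auto
qed

lemma is_opt_unique:
  assumes "is_opt A g x" "is_opt A g y" "midpoint x y \<in> A"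
    and "x \<noteq> y \<Longrightarrow> g (midpoint x y) < (g x + g y) / 2"
  shows "x = y"
proof (rule ccontr)
  assume "x \<noteq> y"
  moreover have "g x \<le> g (midpoint x y)" "g x = g y"
    using assms(1-3) unfolding is_opt_def by (auto intro: order.antisym)
  ultimately show False using assms(4) by simp
qed

lemma is_opt_exists_if_compact_cover:
  assumes "compact C" "continuous_on C (J \<circ> g)" "g ` C = A" "A \<noteq> {}"
  shows "\<exists>x. is_opt A J x"
proof -
  obtain c where "c \<in> C" "\<forall>y\<in>C. (J \<circ> g) c \<le> (J \<circ> g) y"
    using continuous_attains_inf[OF assms(1) _ assms(2)] assms(3,4) by blast
  then have "is_opt A J (g c)" using assms(3) unfolding is_opt_def by auto
  then show ?thesis ..
qed

lemma bdd_below_if_compact_cover: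
  fixes J :: "'a \<Rightarrow> real"
  assumes "compact C" "continuous_on C (J \<circ> g)" "g ` C = A"
  shows "bdd_below (J ` A)"
proof -
  have "J ` A = (J \<circ> g) ` C"
    unfolding assms(3)[symmetric] by (rule image_comp)
  then show ?thesis
    using compact_continuous_image[OF assms(2,1)] by (auto intro: bounded_imp_bdd_below compact_imp_bounded)
qed

lemma bounded_vec_components:
  assumes "bounded S"
  shows "bounded {R :: ('a::real_normed_vector)^'s::finite. \<forall>s. R$s \<in> S}"
proof -
  obtain M where M: "\<forall>v\<in>S. norm v \<le> M" using assms unfolding bounded_iff by blast
  show ?thesis unfolding bounded_iff
  proof (intro exI ballI)
    fix R :: "'a^'s" assume "R \<in> {R. \<forall>s. R$s \<in> S}"
    then have "\<forall>s. norm (R$s) \<le> M" using M by auto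
    have "norm R \<le> (\<Sum>s\<in>UNIV. norm (R$s))"
      unfolding norm_vec_def by (rule L2_set_le_sum) auto
    also have "\<dots> \<le> real CARD('s) * M"
      using \<open>\<forall>s. norm (R$s) \<le> M\<close> sum_bounded_above[of UNIV "\<lambda>s. norm (R$s)" M] by simp
    finally show "norm R \<le> real CARD('s) * M" .
  qed
qed

lemma interior_min_deriv_zero:
  fixes g :: "real \<Rightarrow> real"
  assumes "DERIV g x :> D" "lo < x" "x < hi" "\<And>y. lo \<le> y \<Longrightarrow> y \<le> hi \<Longrightarrow> g x \<le> g y"
  shows "D = 0"
proof (rule DERIV_local_min[OF assms(1), of "min (x - lo) (hi - x)"])
  show "0 < min (x - lo) (hi - x)" using assms by auto
  show "\<forall>y. \<bar>x - y\<bar> < min (x - lo) (hi - x) \<longrightarrow> g x \<le> g y"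
    using assms(4) by (auto simp: abs_if split: if_splits)
qed

lemma C1_on_interval_continuous_on:
  assumes "C1_on_interval lo hi c"
  shows "continuous_on {lo..hi} c"
  using assms DERIV_continuous unfolding C1_on_interval_def continuous_on_eq_continuous_within by blast

lemma C1_on_interval_DERIV:
  assumes "C1_on_interval lo hi c" "lo < x" "x < hi"
  obtains D where "DERIV c x :> D"
proof -
  obtain c' where "\<forall>y\<in>{lo..hi}. (c has_real_derivative c' y) (at y within {lo..hi})"
    using assms(1) unfolding C1_on_interval_def by blast
  then have "(c has_real_derivative c' x) (at x within {lo..hi})" using assms(2,3) by simp
  then show thesis using that at_within_Icc_at[OF assms(2,3)] by simp
qed

lemma Omega_midpoint:
  assumes "x \<in> Omega H f qlb qub qlp qup D" "y \<in> Omega H f qlb qub qlp qup D"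
  shows "midpoint x y \<in> Omega H f qlb qub qlp qup D"
proof -
  obtain a b c a' b' c' where xy: "x = (a, b, c)" "y = (a', b', c')"
    by (cases x, cases y) auto
  define z where "z = a + b + c - D"
  define z' where "z' = a' + b' + c' - D"
  have mid: "midpoint x y = (midpoint a a', midpoint b b', midpoint c c')"
    unfolding xy midpoint_def by simp
  have zmid: "midpoint a a' + midpoint b b' + midpoint c c' - D = midpoint z z'"
    unfolding z_def z'_def by (simp add: vec_eq_iff field_simps)
  have Hmid: "(H *v midpoint z z') $ l = ((H *v z) $ l + (H *v z') $ l) / 2" for l
    by (simp add: midpoint_def matrix_vector_mult_scaleR matrix_vector_right_distrib)
  have summid: "(\<Sum>n\<in>UNIV. midpoint z z' $ n) = ((\<Sum>n\<in>UNIV. z $ n) + (\<Sum>n\<in>UNIV. z' $ n)) / 2"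
    by (simp add: sum.distrib sum_divide_distrib[symmetric])
  have x: "\<forall>n. qlb$n \<le> a$n \<and> a$n \<le> qub$n" "\<forall>n. qlp$n \<le> b$n + c$n \<and> b$n + c$n \<le> qup$n"
    "(\<Sum>n\<in>UNIV. z$n) = 0" "\<forall>l. - f$l \<le> (H *v z)$l \<and> (H *v z)$l \<le> f$l"
    using assms(1) unfolding xy Omega_def z_def by auto
  have y: "\<forall>n. qlb$n \<le> a'$n \<and> a'$n \<le> qub$n" "\<forall>n. qlp$n \<le> b'$n + c'$n \<and> b'$n + c'$n \<le> qup$n"
    "(\<Sum>n\<in>UNIV. z'$n) = 0" "\<forall>l. - f$l \<le> (H *v z')$l \<and> (H *v z')$l \<le> f$l"
    using assms(2) unfolding xy Omega_def z'_def by auto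
  show ?thesis
    unfolding mid Omega_def mem_Collect_eq prod.case zmid Hmid summid
  proof (intro conjI allI)
    fix n
    show "qlb$n \<le> midpoint a a' $ n" "midpoint a a' $ n \<le> qub$n"
      using x(1)[rule_format, of n] y(1)[rule_format, of n] by auto
    show "qlp$n \<le> midpoint b b' $ n + midpoint c c' $ n" "midpoint b b' $ n + midpoint c c' $ n \<le> qup$n"
      using x(2)[rule_format, of n] y(2)[rule_format, of n] by (auto simp: field_simps)
  next
    show "((\<Sum>n\<in>UNIV. z$n) + (\<Sum>n\<in>UNIV. z'$n)) / 2 = 0" using x(3) y(3) by simp
  next
    fix l
    show "- f$l \<le> ((H *v z)$l + (H *v z')$l) / 2" "((H *v z)$l + (H *v z')$l) / 2 \<le> f$l"
      using x(4)[rule_format, of l] y(4)[rule_format, of l] by auto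
  qed
qed

text \<open>Scenario-indexed regulation plans \<open>'s \<Rightarrow> real^'n\<close> carry no Euclidean topology; they are
  parametrised by \<open>real^'n^'s\<close> to obtain compactness of the feasible sets.\<close>

definition scen_of_vec ::
  "(real^'n::finite) \<times> (real^'n) \<times> (real^'n^'s::finite) \<Rightarrow> (real^'n) \<times> (real^'n) \<times> ('s \<Rightarrow> real^'n)" where
  "scen_of_vec x = (fst x, fst (snd x), ($) (snd (snd x)))"

lemma scen_of_vec_image_vimage: "scen_of_vec ` (scen_of_vec -` A) = A"
proof (rule surj_image_vimage_eq)
  show "surj scen_of_vec"
    by (rule surjI[of _ "\<lambda>(a, b, r). (a, b, vec_lambda r)"]) (auto simp: scen_of_vec_def)
qed

lemma closed_sys_box_param: "closed (scen_of_vec -` sys_box qlb qub qlp qup o1)"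
  unfolding vimage_def sys_box_def scen_of_vec_def
  by (simp add: case_prod_beta vec_eq_iff flip: zero_vec_def)
     (intro closed_Collect_conj closed_Collect_all closed_Collect_le closed_Collect_eq continuous_intros)

lemma closed_sys_feas_param: "closed (scen_of_vec -` sys_feas H f qlb qub qlp qup d o1)"
  unfolding vimage_def sys_feas_def Omega_def scen_of_vec_def
  by (simp add: case_prod_beta)
     (intro closed_Collect_conj closed_Collect_all closed_Collect_le closed_Collect_eq continuous_intros
        bounded_linear.continuous_on[OF matrix_vector_mul_bounded_linear])

lemma bounded_sys_box_param:
  fixes qlb :: "real^'n::finite" and o1 :: "'s::finite"
  shows "bounded (scen_of_vec -` sys_box qlb qub qlp qup o1)"
proof (rule bounded_subset)
  show "bounded (cbox qlb qub \<times> cbox qlp qup \<times> {R :: real^'n^'s. \<forall>s. R$s \<in> cbox (qlp - qup) (qup - qlp)})"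
    by (intro bounded_Times bounded_cbox bounded_vec_components)
  show "scen_of_vec -` sys_box qlb qub qlp qup o1
      \<subseteq> cbox qlb qub \<times> cbox qlp qup \<times> {R. \<forall>s. R$s \<in> cbox (qlp - qup) (qup - qlp)}"
  proof (clarsimp simp: sys_box_def scen_of_vec_def mem_box_cart)
    fix qp :: "real^'n" and R :: "real^'n^'s"
    assume R0: "R $ o1 = 0" and "\<forall>s n. qlp$n \<le> qp$n + R$s$n \<and> qp$n + R$s$n \<le> qup$n"
    then have box: "qlp$n \<le> qp$n + R$s$n" "qp$n + R$s$n \<le> qup$n" for s n
      by blast+
    have qp: "qlp$n \<le> qp$n \<and> qp$n \<le> qup$n" for n
      using box[of n o1] R0 by simp
    show "(\<forall>n. qlp$n \<le> qp$n \<and> qp$n \<le> qup$n) \<and>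
        (\<forall>s n. qlp$n - qup$n \<le> R$s$n \<and> R$s$n \<le> qup$n - qlp$n)"
    proof (intro conjI allI)
      fix s n
      show "qlp$n - qup$n \<le> R$s$n" "R$s$n \<le> qup$n - qlp$n"
        using box[of n s] qp[of n] by linarith+
    qed (use qp in auto)
  qed
qed

locale ed_fr_model =
  fixes H :: "real^'n::finite^'l::finite" and f :: "real^'l"
    and qlb qub qlp qup :: "real^'n" and K :: nat and p :: "'s::finite \<Rightarrow> real"
    and cb cp :: "'n \<Rightarrow> real \<Rightarrow> real" and d :: "'s \<Rightarrow> real^'n" and o1 :: 's
    and lam :: "'s \<Rightarrow> real" and mul muu :: "'s \<Rightarrow> real^'l"
  assumes prob_pos: "\<And>s. p s > 0" and prob_total: "(\<Sum>s\<in>UNIV. p s) = real K"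
    and cb_convex: "\<And>n. strict_convex_on {qlb$n..qub$n} (cb n)"
    and cp_convex: "\<And>n. strict_convex_on {qlp$n..qup$n} (cp n)"
    and cb_C1: "\<And>n. C1_on_interval (qlb$n) (qub$n) (cb n)"
    and cp_C1: "\<And>n. C1_on_interval (qlp$n) (qup$n) (cp n)"
    and feasible: "sys_feas H f qlb qub qlp qup d o1 \<noteq> {}"
    and multipliers: "sys_lagrange_mult H f qlb qub qlp qup p cb cp d o1 lam mul muu"
begin

abbreviation "Feas \<equiv> sys_feas H f qlb qub qlp qup d o1"
abbreviation "Box \<equiv> sys_box qlb qub qlp qup o1"
abbreviation "Cost \<equiv> sys_obj p cb cp"
abbreviation "Lagr \<equiv> sys_lagr H f p cb cp d lam mul muu"

definition price :: "'s \<Rightarrow> real^'n" where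
  "price s = nodal_price H (lam s) (mul s) (muu s)"

definition line_rent :: "'s \<Rightarrow> real" where
  "line_rent s = (\<Sum>l\<in>UNIV. (mul s$l + muu s$l) * f$l)"

text \<open>Minus the multiplier terms of outcome \<open>s\<close> at the net injection \<open>z\<close>.\<close>

definition slack :: "'s \<Rightarrow> real^'n \<Rightarrow> real" where
  "slack s z = (\<Sum>n\<in>UNIV. price s$n * z$n) + line_rent s"

definition weighted_price :: "'n \<Rightarrow> real" where
  "weighted_price n = (\<Sum>s\<in>UNIV. p s * price s$n)"

definition lagr_dispatch :: "real^'n \<Rightarrow> real" where
  "lagr_dispatch qb = (\<Sum>n\<in>UNIV. real K * cb n (qb$n) - weighted_price n * qb$n)"

definition lagr_regulation :: "'s \<Rightarrow> real^'n \<Rightarrow> real" where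
  "lagr_regulation s y = (\<Sum>n\<in>UNIV. cp n (y$n) - price s$n * y$n)"

definition lagr_const :: real where
  "lagr_const = (\<Sum>s\<in>UNIV. p s * ((\<Sum>n\<in>UNIV. price s$n * d s$n) - line_rent s))"

lemma K_pos: "real K > 0"
  using sum_pos[of UNIV p] prob_pos prob_total by simp

lemma sys_lagr_eq: "Lagr (qb, qp, r) = Cost (qb, qp, r) - (\<Sum>s\<in>UNIV. p s * slack s (qb + qp + r s - d s))"
proof -
  have terms: "- p s * lam s * (\<Sum>n\<in>UNIV. z$n) + p s * (\<Sum>l\<in>UNIV. mul s$l * (- f$l - (H *v z)$l))
      + p s * (\<Sum>l\<in>UNIV. muu s$l * ((H *v z)$l - f$l)) = - (p s * slack s z)" for s z
    using arg_cong[OF multiplier_terms_eq[of "lam s" z "mul s" f H "muu s"], of "(*) (p s)"]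
    by (simp add: slack_def price_def line_rent_def algebra_simps)
  show ?thesis
    unfolding sys_lagr_def Let_def prod.case terms sum_negf by simp
qed

lemma sys_obj_eq:
  "Cost (qb, qp, r) = real K * (\<Sum>n\<in>UNIV. cb n (qb$n)) + (\<Sum>s\<in>UNIV. p s * (\<Sum>n\<in>UNIV. cp n (qp$n + r s$n)))"
  unfolding sys_obj_def prob_total[symmetric]
  by (simp add: sum.distrib distrib_left sum_distrib_right)

lemma slack_split:
  "slack s (qb + y - d s) = (\<Sum>n\<in>UNIV. price s$n * qb$n) + (\<Sum>n\<in>UNIV. price s$n * y$n)
     - ((\<Sum>n\<in>UNIV. price s$n * d s$n) - line_rent s)"
  unfolding slack_def by (simp add: algebra_simps sum.distrib sum_subtractf)

lemma sys_lagr_separable: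
  "Lagr (qb, qp, r) = lagr_dispatch qb + (\<Sum>s\<in>UNIV. p s * lagr_regulation s (qp + r s)) + lagr_const"
proof -
  have "qb + qp + r s - d s = qb + (qp + r s) - d s" for s by (simp add: algebra_simps)
  then have slacks: "(\<Sum>s\<in>UNIV. p s * slack s (qb + qp + r s - d s)) =
     (\<Sum>s\<in>UNIV. p s * (\<Sum>n\<in>UNIV. price s$n * qb$n))
     + (\<Sum>s\<in>UNIV. p s * (\<Sum>n\<in>UNIV. price s$n * (qp + r s)$n)) - lagr_const"
    unfolding slack_split lagr_const_def right_diff_distrib distrib_left sum.distrib sum_subtractf
    by (simp add: distrib_left sum.distrib)
  have "(\<Sum>s\<in>UNIV. p s * (\<Sum>n\<in>UNIV. price s$n * qb$n)) = (\<Sum>s\<in>UNIV. \<Sum>n\<in>UNIV. p s * price s$n * qb$n)"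
    by (simp add: sum_distrib_left mult.assoc)
  also have "\<dots> = (\<Sum>n\<in>UNIV. weighted_price n * qb$n)"
    unfolding weighted_price_def by (subst sum.swap) (simp add: sum_distrib_right)
  finally have dispatch: "(\<Sum>s\<in>UNIV. p s * (\<Sum>n\<in>UNIV. price s$n * qb$n)) = (\<Sum>n\<in>UNIV. weighted_price n * qb$n)" .
  show ?thesis
    using slacks dispatch unfolding sys_lagr_eq sys_obj_eq lagr_dispatch_def lagr_regulation_def
    by (simp add: sum_subtractf right_diff_distrib sum_distrib_left sum.distrib)
qed

lemma slack_nonneg:
  assumes "(qb, qp, r) \<in> Omega H f qlb qub qlp qup (d s)"
  shows "0 \<le> slack s (qb + qp + r - d s)"
proof -
  define z where "z = qb + qp + r - d s"
  have balance: "(\<Sum>n\<in>UNIV. z$n) = 0" and lines: "\<forall>l. - f$l \<le> (H *v z)$l \<and> (H *v z)$l \<le> f$l"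
    using assms unfolding Omega_def z_def by auto
  have mul_nonneg: "0 \<le> mul s$l" and muu_nonneg: "0 \<le> muu s$l" for l
    using multipliers unfolding sys_lagrange_mult_def by auto
  have "(\<Sum>l\<in>UNIV. mul s$l * (- f$l - (H *v z)$l)) \<le> 0"
    using lines mul_nonneg by (intro sum_nonpos mult_nonneg_nonpos) auto
  moreover have "(\<Sum>l\<in>UNIV. muu s$l * ((H *v z)$l - f$l)) \<le> 0"
    using lines muu_nonneg by (intro sum_nonpos mult_nonneg_nonpos) auto
  ultimately show ?thesis
    using multiplier_terms_eq[of "lam s" z "mul s" f H "muu s"] balance
    unfolding z_def[symmetric] slack_def price_def line_rent_def by simp
qed

lemma sys_feas_subset_box: "Feas \<subseteq> Box"
  unfolding sys_feas_def sys_box_def Omega_def by auto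

lemma sys_lagr_le_obj:
  assumes "x \<in> Feas"
  shows "Lagr x \<le> Cost x"
proof -
  obtain qb qp r where x: "x = (qb, qp, r)" by (cases x) auto
  then have "\<forall>s. (qb, qp, r s) \<in> Omega H f qlb qub qlp qup (d s)"
    using assms unfolding sys_feas_def by auto
  then have "0 \<le> (\<Sum>s\<in>UNIV. p s * slack s (qb + qp + r s - d s))"
    by (intro sum_nonneg mult_nonneg_nonneg) (auto simp: slack_nonneg less_imp_le prob_pos)
  then show ?thesis unfolding x sys_lagr_eq by simp
qed

lemma compact_box_param: "compact (scen_of_vec -` Box)"
  using closed_sys_box_param bounded_sys_box_param compact_eq_bounded_closed by blast

lemma compact_feas_param: "compact (scen_of_vec -` Feas)"
proof -
  have "scen_of_vec -` Feas = scen_of_vec -` Box \<inter> scen_of_vec -` Feas"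
    using sys_feas_subset_box by auto
  also have "compact \<dots>"
    by (rule compact_Int_closed[OF compact_box_param closed_sys_feas_param])
  finally show ?thesis .
qed

lemma continuous_on_box_param:
  "continuous_on (scen_of_vec -` Box) (\<lambda>x. cb n (fst x $ n))"
  "continuous_on (scen_of_vec -` Box) (\<lambda>x. cp n (fst (snd x) $ n + snd (snd x) $ s $ n))"
  by (intro continuous_on_compose2[OF C1_on_interval_continuous_on[OF cb_C1]]
        continuous_on_compose2[OF C1_on_interval_continuous_on[OF cp_C1]] continuous_intros;
      auto simp: sys_box_def scen_of_vec_def)+

lemma sys_opt_exists: "\<exists>x. is_opt Feas Cost x"
proof (rule is_opt_exists_if_compact_cover[OF compact_feas_param _ scen_of_vec_image_vimage feasible])
  have "continuous_on (scen_of_vec -` Box) (Cost \<circ> scen_of_vec)"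
    unfolding comp_def scen_of_vec_def sys_obj_eq
    by (intro continuous_intros continuous_on_box_param[unfolded scen_of_vec_def])
  then show "continuous_on (scen_of_vec -` Feas) (Cost \<circ> scen_of_vec)"
    by (rule continuous_on_subset) (use sys_feas_subset_box in auto)
qed

lemma bdd_below_sys_lagr: "bdd_below (Lagr ` Box)"
proof (rule bdd_below_if_compact_cover[OF compact_box_param _ scen_of_vec_image_vimage])
  show "continuous_on (scen_of_vec -` Box) (Lagr \<circ> scen_of_vec)"
    unfolding comp_def scen_of_vec_def sys_lagr_separable lagr_dispatch_def lagr_regulation_def
      vector_add_component
    by (intro continuous_intros continuous_on_box_param[unfolded scen_of_vec_def])
qed

text \<open>This is where the absence of a duality gap enters.\<close>

lemma sys_opt_minimises_lagr:
  assumes "is_opt Feas Cost x"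
  shows "\<forall>y\<in>Box. Lagr x \<le> Lagr y" and "Lagr x = Cost x"
proof -
  have "x \<in> Feas" and "\<forall>y\<in>Feas. Cost x \<le> Cost y" using assms unfolding is_opt_def by auto
  then have "(INF y\<in>Feas. Cost y) = Cost x"
    by (intro cInf_eq_minimum) auto
  then have "(INF y\<in>Box. Lagr y) = Cost x"
    using multipliers unfolding sys_lagrange_mult_def by simp
  then have lower: "\<forall>y\<in>Box. Cost x \<le> Lagr y"
    using cINF_lower[OF bdd_below_sys_lagr] by metis
  moreover have "Lagr x \<le> Cost x" using sys_lagr_le_obj \<open>x \<in> Feas\<close> by blast
  moreover have "x \<in> Box" using \<open>x \<in> Feas\<close> sys_feas_subset_box by auto
  ultimately show "Lagr x = Cost x" by (meson order.antisym)
  with lower show "\<forall>y\<in>Box. Lagr x \<le> Lagr y" by simp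
qed

lemma sys_opt_slack_zero:
  assumes "is_opt Feas Cost (qb, qp, r)"
  shows "slack s (qb + qp + r s - d s) = 0"
proof -
  have "\<forall>t. (qb, qp, r t) \<in> Omega H f qlb qub qlp qup (d t)"
    using assms unfolding is_opt_def sys_feas_def by auto
  then have nonneg: "\<forall>t\<in>UNIV. 0 \<le> p t * slack t (qb + qp + r t - d t)"
    by (auto simp: slack_nonneg less_imp_le prob_pos)
  have "(\<Sum>t\<in>UNIV. p t * slack t (qb + qp + r t - d t)) = 0"
    using sys_opt_minimises_lagr(2)[OF assms] sys_lagr_eq by simp
  then have "p s * slack s (qb + qp + r s - d s) = 0"
    using sum_nonneg_eq_0_iff[of UNIV "\<lambda>t. p t * slack t (qb + qp + r t - d t)"] nonneg by simp
  then show ?thesis using prob_pos[of s] by simp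
qed

lemma sys_opt_feasible:
  assumes "is_opt Feas Cost (qb, qp, r)"
  shows "r o1 = 0" and "(qb, qp, r s) \<in> Omega H f qlb qub qlp qup (d s)"
  using assms unfolding is_opt_def sys_feas_def by auto

lemma sys_opt_lagr_dispatch_min:
  assumes "is_opt Feas Cost (qb, qp, r)" "\<forall>n. qlb$n \<le> a$n \<and> a$n \<le> qub$n"
  shows "lagr_dispatch qb \<le> lagr_dispatch a"
proof -
  have "(qb, qp, r) \<in> Box" using assms(1) sys_feas_subset_box unfolding is_opt_def by auto
  then have "(a, qp, r) \<in> Box" using assms(2) unfolding sys_box_def by auto
  then have "Lagr (qb, qp, r) \<le> Lagr (a, qp, r)"
    using sys_opt_minimises_lagr(1)[OF assms(1)] by blast
  then show ?thesis unfolding sys_lagr_separable by simp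
qed

text \<open>Changing the regulation output of one outcome only: for outcome 1 this moves \<open>q\<^sup>p\<close> and
  compensates in \<open>r\<^sub>s\<close> for all other outcomes.\<close>

lemma sys_opt_lagr_regulation_min:
  assumes "is_opt Feas Cost (qb, qp, r)" "\<forall>n. qlp$n \<le> w$n \<and> w$n \<le> qup$n"
  shows "lagr_regulation s (qp + r s) \<le> lagr_regulation s w"
proof -
  have box: "(qb, qp, r) \<in> Box" using assms(1) sys_feas_subset_box unfolding is_opt_def by auto
  then have r0: "r o1 = 0" unfolding sys_box_def by auto
  have min: "\<forall>y\<in>Box. Lagr (qb, qp, r) \<le> Lagr y" using sys_opt_minimises_lagr(1)[OF assms(1)] .
  obtain qp' r' where box': "(qb, qp', r') \<in> Box"
    and out: "\<And>t. qp' + r' t = (if t = s then w else qp + r t)"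
  proof (cases "s = o1")
    case True
    show thesis
      by (rule that[of w "\<lambda>t. if t = o1 then 0 else r t + qp - w"])
        (use box assms(2) True in \<open>auto simp: sys_box_def algebra_simps\<close>)
  next
    case False
    show thesis
      by (rule that[of qp "r(s := w - qp)"])
        (use box assms(2) False r0 in \<open>auto simp: sys_box_def algebra_simps\<close>)
  qed
  have "Lagr (qb, qp, r) \<le> Lagr (qb, qp', r')" using min box' by blast
  then have "(\<Sum>t\<in>UNIV. p t * lagr_regulation t (qp + r t))
      \<le> (\<Sum>t\<in>UNIV. p t * lagr_regulation t (if t = s then w else qp + r t))"
    unfolding sys_lagr_separable out by simp
  then have "p s * lagr_regulation s (qp + r s) \<le> p s * lagr_regulation s w"
    unfolding sum_replace_term[of "\<lambda>t v. p t * lagr_regulation t v"] by simp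
  then show ?thesis using prob_pos[of s] by simp
qed


lemma sum_price_diff_eq: "(\<Sum>s\<in>UNIV. p s * (price s$n - price o1$n)) = weighted_price n - real K * price o1$n"
  unfolding weighted_price_def
  by (simp add: right_diff_distrib sum_subtractf prob_total flip: sum_distrib_right)

lemma ed_obj_eq:
  assumes "\<forall>n. \<delta>$n = weighted_price n - real K * price o1$n"
  shows "ed_obj K \<delta> cb cp (a, b) = lagr_dispatch a + real K * lagr_regulation o1 b
     + real K * slack o1 (a + b - d o1) + real K * ((\<Sum>n\<in>UNIV. price o1$n * d o1$n) - line_rent o1)"
proof -
  have "lagr_dispatch a + real K * lagr_regulation o1 b + real K * slack o1 (a + b - d o1)
       + real K * ((\<Sum>n\<in>UNIV. price o1$n * d o1$n) - line_rent o1)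
     = (\<Sum>n\<in>UNIV. real K * cb n (a$n) - weighted_price n * a$n)
       + (\<Sum>n\<in>UNIV. real K * (cp n (b$n) - price o1$n * b$n))
       + (\<Sum>n\<in>UNIV. real K * (price o1$n * (a + b - d o1)$n)) + (\<Sum>n\<in>UNIV. real K * (price o1$n * d o1$n))"
    unfolding lagr_dispatch_def lagr_regulation_def slack_def
    by (simp add: sum_distrib_left distrib_left right_diff_distrib)
  also have "\<dots> = (\<Sum>n\<in>UNIV. real K * cb n (a$n) - weighted_price n * a$n + real K * (cp n (b$n) - price o1$n * b$n)
       + real K * (price o1$n * (a + b - d o1)$n) + real K * (price o1$n * d o1$n))"
    by (simp add: sum.distrib)
  also have "\<dots> = (\<Sum>n\<in>UNIV. real K * cb n (a$n) + real K * cp n (b$n) - \<delta>$n * a$n)"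
    by (intro sum.cong refl) (simp add: assms algebra_simps)
  finally show ?thesis unfolding ed_obj_def by simp
qed

lemma ed_opt_of_sys_opt:
  assumes opt: "is_opt Feas Cost (qb, qp, r)"
    and \<delta>: "\<forall>n. \<delta>$n = weighted_price n - real K * price o1$n"
  shows "is_opt (ed_feas H f qlb qub qlp qup (d o1)) (ed_obj K \<delta> cb cp) (qb, qp)"
  unfolding is_opt_def
proof (intro conjI ballI)
  have r0: "r o1 = 0" using sys_opt_feasible(1)[OF opt] .
  show "(qb, qp) \<in> ed_feas H f qlb qub qlp qup (d o1)"
    using sys_opt_feasible(2)[OF opt, of o1] r0 unfolding ed_feas_def by simp
  fix y assume y: "y \<in> ed_feas H f qlb qub qlp qup (d o1)"
  obtain a b where ab: "y = (a, b)" by (cases y) auto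
  have \<Omega>: "(a, b, 0) \<in> Omega H f qlb qub qlp qup (d o1)" using y ab unfolding ed_feas_def by auto
  then have "0 \<le> slack o1 (a + b - d o1)" using slack_nonneg by fastforce
  moreover have "slack o1 (qb + qp - d o1) = 0" using sys_opt_slack_zero[OF opt, of o1] r0 by simp
  moreover have "lagr_dispatch qb \<le> lagr_dispatch a"
    using \<Omega> by (intro sys_opt_lagr_dispatch_min[OF opt]) (auto simp: Omega_def)
  moreover have "lagr_regulation o1 qp \<le> lagr_regulation o1 b"
    using \<Omega> sys_opt_lagr_regulation_min[OF opt, of b o1] r0 by (auto simp: Omega_def)
  ultimately have "real K * lagr_regulation o1 qp \<le> real K * lagr_regulation o1 b"
    and "0 \<le> real K * slack o1 (a + b - d o1)" "real K * slack o1 (qb + qp - d o1) = 0"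
    and "lagr_dispatch qb \<le> lagr_dispatch a"
    using K_pos by (simp_all add: mult_left_mono)
  then show "ed_obj K \<delta> cb cp (qb, qp) \<le> ed_obj K \<delta> cb cp y"
    unfolding ab ed_obj_eq[OF \<delta>] by linarith
qed

lemma fr_obj_eq:
  "fr_obj cp qp r' = lagr_regulation s (qp + r') + slack s (qb + qp + r' - d s)
     - (\<Sum>n\<in>UNIV. price s$n * qb$n) + ((\<Sum>n\<in>UNIV. price s$n * d s$n) - line_rent s)"
proof -
  have "qb + qp + r' - d s = qb + (qp + r') - d s" by (simp add: algebra_simps)
  then show ?thesis
    unfolding slack_split lagr_regulation_def fr_obj_def
    by (simp add: sum_subtractf sum.distrib distrib_left)
qed

lemma fr_opt_of_sys_opt:
  assumes opt: "is_opt Feas Cost (qb, qp, r)"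
  shows "is_opt (fr_feas H f qlb qub qlp qup qb qp (d s)) (fr_obj cp qp) (r s)"
  unfolding is_opt_def
proof (intro conjI ballI)
  show "r s \<in> fr_feas H f qlb qub qlp qup qb qp (d s)"
    using sys_opt_feasible(2)[OF opt] unfolding fr_feas_def by auto
  fix r' assume "r' \<in> fr_feas H f qlb qub qlp qup qb qp (d s)"
  then have \<Omega>: "(qb, qp, r') \<in> Omega H f qlb qub qlp qup (d s)" unfolding fr_feas_def by auto
  have "lagr_regulation s (qp + r s) \<le> lagr_regulation s (qp + r')"
    using \<Omega> by (intro sys_opt_lagr_regulation_min[OF opt]) (auto simp: Omega_def)
  then show "fr_obj cp qp (r s) \<le> fr_obj cp qp r'"
    unfolding fr_obj_eq[of qp "r s" s qb] fr_obj_eq[of qp r' s qb]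
    using sys_opt_slack_zero[OF opt, of s] slack_nonneg[OF \<Omega>] by simp
qed

lemma ed_opt_unique:
  assumes "is_opt (ed_feas H f qlb qub qlp qup D) (ed_obj K \<delta> cb cp) x"
    and "is_opt (ed_feas H f qlb qub qlp qup D) (ed_obj K \<delta> cb cp) x'"
  shows "x = x'"
proof -
  obtain a b a' b' where x: "x = (a, b)" "x' = (a', b')" by (cases x, cases x') auto
  have \<Omega>: "(a, b, 0) \<in> Omega H f qlb qub qlp qup D" "(a', b', 0) \<in> Omega H f qlb qub qlp qup D"
    using assms unfolding x is_opt_def ed_feas_def by auto
  have mid: "midpoint x x' = (midpoint a a', midpoint b b')"
    "midpoint (a, b, 0) (a', b', 0) = (midpoint a a', midpoint b b', 0 :: real^'n)"
    unfolding x midpoint_def by simp_all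
  have ranges: "a$n \<in> {qlb$n..qub$n}" "a'$n \<in> {qlb$n..qub$n}" "b$n \<in> {qlp$n..qup$n}" "b'$n \<in> {qlp$n..qup$n}" for n
    using \<Omega> unfolding Omega_def by auto
  define Cb where "Cb u = (\<Sum>n\<in>UNIV. cb n (u$n))" for u :: "real^'n"
  define Cp where "Cp u = (\<Sum>n\<in>UNIV. cp n (u$n))" for u :: "real^'n"
  define Lin where "Lin u = (\<Sum>n\<in>UNIV. \<delta>$n * u$n)" for u :: "real^'n"
  have obj: "ed_obj K \<delta> cb cp (u, v) = real K * Cb u + real K * Cp v - Lin u" for u v
    unfolding ed_obj_def Cb_def Cp_def Lin_def by (simp add: sum.distrib sum_subtractf sum_distrib_left)
  have lin: "Lin (midpoint a a') = (Lin a + Lin a') / 2"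
    unfolding Lin_def by (simp add: sum.distrib sum_divide_distrib[symmetric] distrib_left)
  have "Cb (midpoint a a') \<le> (Cb a + Cb a') / 2" "Cp (midpoint b b') \<le> (Cp b + Cp b') / 2"
    unfolding Cb_def Cp_def
    by (intro sum_strict_convex_midpoint_le[OF cb_convex ranges(1,2)] sum_strict_convex_midpoint_le[OF cp_convex ranges(3,4)])+
  moreover have "Cb (midpoint a a') < (Cb a + Cb a') / 2 \<or> Cp (midpoint b b') < (Cp b + Cp b') / 2" if "x \<noteq> x'"
    using that sum_strict_convex_midpoint_less[OF cb_convex ranges(1,2)]
      sum_strict_convex_midpoint_less[OF cp_convex ranges(3,4)]
    unfolding x Cb_def Cp_def by auto
  ultimately have "x \<noteq> x' \<Longrightarrow> real K * (Cb (midpoint a a') + Cp (midpoint b b'))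
      < real K * ((Cb a + Cb a') / 2 + (Cp b + Cp b') / 2)"
    using K_pos by (auto intro!: mult_strict_left_mono; linarith)
  then have "x \<noteq> x' \<Longrightarrow> ed_obj K \<delta> cb cp (midpoint x x') < (ed_obj K \<delta> cb cp x + ed_obj K \<delta> cb cp x') / 2"
    unfolding mid(1) unfolding x obj using lin by (simp add: field_simps)
  moreover have "midpoint x x' \<in> ed_feas H f qlb qub qlp qup D"
    using Omega_midpoint[OF \<Omega>] unfolding mid ed_feas_def by simp
  ultimately show ?thesis by (intro is_opt_unique[OF assms])
qed

lemma fr_opt_unique:
  assumes "is_opt (fr_feas H f qlb qub qlp qup qb qp D) (fr_obj cp qp) r"
    and "is_opt (fr_feas H f qlb qub qlp qup qb qp D) (fr_obj cp qp) r'"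
  shows "r = r'"
proof (rule is_opt_unique[OF assms])
  have \<Omega>: "(qb, qp, r) \<in> Omega H f qlb qub qlp qup D" "(qb, qp, r') \<in> Omega H f qlb qub qlp qup D"
    using assms unfolding is_opt_def fr_feas_def by auto
  show "midpoint r r' \<in> fr_feas H f qlb qub qlp qup qb qp D"
    using Omega_midpoint[OF \<Omega>] unfolding fr_feas_def midpoint_def by simp
  have ranges: "(qp + r)$n \<in> {qlp$n..qup$n}" "(qp + r')$n \<in> {qlp$n..qup$n}" for n
    using \<Omega> unfolding Omega_def by auto
  have obj: "fr_obj cp qp x = (\<Sum>n\<in>UNIV. cp n ((qp + x)$n))" for x
    unfolding fr_obj_def by simp
  have mid: "qp + midpoint r r' = midpoint (qp + r) (qp + r')"
    by (simp add: vec_eq_iff field_simps)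
  assume "r \<noteq> r'"
  then show "fr_obj cp qp (midpoint r r') < (fr_obj cp qp r + fr_obj cp qp r') / 2"
    unfolding obj mid by (intro sum_strict_convex_midpoint_less[OF cp_convex ranges]) simp
qed

lemma sys_opt_of_decomposition:
  assumes \<delta>: "\<forall>n. \<delta>$n = weighted_price n - real K * price o1$n"
    and ed: "is_opt (ed_feas H f qlb qub qlp qup (d o1)) (ed_obj K \<delta> cb cp) (qb, qp)"
    and fr: "\<And>s. is_opt (fr_feas H f qlb qub qlp qup qb qp (d s)) (fr_obj cp qp) (r s)"
  shows "is_opt Feas Cost (qb, qp, r)"
proof -
  obtain qb' qp' r' where opt: "is_opt Feas Cost (qb', qp', r')" using sys_opt_exists by auto
  have "(qb', qp') = (qb, qp)" using ed_opt_unique[OF ed_opt_of_sys_opt[OF opt \<delta>] ed] .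
  then have eq: "qb' = qb" "qp' = qp" by simp_all
  have "r' s = r s" for s
    using fr_opt_unique[OF fr_opt_of_sys_opt[OF opt, of s, unfolded eq] fr] .
  then show ?thesis using opt unfolding eq by (metis ext)
qed

lemma decomposable_if_price_condition:
  assumes "\<forall>n. \<delta>$n = (\<Sum>s\<in>UNIV. p s * (price s$n - price o1$n))"
  shows "ed_fr_decomposable H f qlb qub qlp qup K p cb cp d o1 \<delta>"
proof -
  have \<delta>: "\<forall>n. \<delta>$n = weighted_price n - real K * price o1$n"
    using assms sum_price_diff_eq by simp
  show ?thesis
    unfolding ed_fr_decomposable_def
    using sys_opt_feasible(1) ed_opt_of_sys_opt[OF _ \<delta>] fr_opt_of_sys_opt sys_opt_of_decomposition[OF \<delta>]
    by blast
qed


lemma sys_opt_dispatch_foc: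
  assumes opt: "is_opt Feas Cost (qb, qp, r)" and interior: "qlb$n < qb$n" "qb$n < qub$n"
    and D: "DERIV (cb n) (qb$n) :> D"
  shows "real K * D = weighted_price n"
proof -
  have "real K * D - weighted_price n = 0"
  proof (rule interior_min_deriv_zero[OF _ interior])
    show "DERIV (\<lambda>t. real K * cb n t - weighted_price n * t) (qb$n) :> real K * D - weighted_price n"
      by (auto intro!: derivative_eq_intros D)
    fix y assume "qlb$n \<le> y" "y \<le> qub$n"
    then have "\<forall>m. qlb$m \<le> (\<chi> m. if m = n then y else qb$m)$m \<and> (\<chi> m. if m = n then y else qb$m)$m \<le> qub$m"
      using sys_opt_feasible(2)[OF opt, of o1] by (auto simp: Omega_def)
    then have "lagr_dispatch qb \<le> lagr_dispatch (\<chi> m. if m = n then y else qb$m)"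
      by (rule sys_opt_lagr_dispatch_min[OF opt])
    then show "real K * cb n (qb$n) - weighted_price n * qb$n \<le> real K * cb n y - weighted_price n * y"
      unfolding lagr_dispatch_def
      using sum_replace_term[of "\<lambda>m v. real K * cb m v - weighted_price m * v" n y "\<lambda>m. qb$m"] by simp
  qed
  then show ?thesis by simp
qed

lemma sys_opt_regulation_foc:
  assumes opt: "is_opt Feas Cost (qb, qp, r)" and interior: "qlp$n < qp$n" "qp$n < qup$n"
    and D: "DERIV (cp n) (qp$n) :> D"
  shows "D = price o1$n"
proof -
  have r0: "r o1 = 0" using sys_opt_feasible(1)[OF opt] .
  have "D - price o1$n = 0"
  proof (rule interior_min_deriv_zero[OF _ interior])
    show "DERIV (\<lambda>t. cp n t - price o1$n * t) (qp$n) :> D - price o1$n"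
      by (auto intro!: derivative_eq_intros D)
    fix y assume "qlp$n \<le> y" "y \<le> qup$n"
    then have "\<forall>m. qlp$m \<le> (\<chi> m. if m = n then y else qp$m)$m \<and> (\<chi> m. if m = n then y else qp$m)$m \<le> qup$m"
      using sys_opt_feasible(2)[OF opt, of o1] r0 by (auto simp: Omega_def)
    from sys_opt_lagr_regulation_min[OF opt this, of o1]
    have "lagr_regulation o1 qp \<le> lagr_regulation o1 (\<chi> m. if m = n then y else qp$m)"
      using r0 by simp
    then show "cp n (qp$n) - price o1$n * qp$n \<le> cp n y - price o1$n * y"
      unfolding lagr_regulation_def
      using sum_replace_term[of "\<lambda>m v. cp m v - price o1$m * v" n y "\<lambda>m. qp$m"] by simp
  qed
  then show ?thesis by simp
qed

text \<open>ED may shift output between the two generators of node \<open>n\<close> without changing the net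
  injection, hence without affecting the balance and line constraints.\<close>

lemma ed_opt_foc:
  assumes ed: "is_opt (ed_feas H f qlb qub qlp qup D) (ed_obj K \<delta> cb cp) (qb, qp)"
    and interior: "qlb$n < qb$n" "qb$n < qub$n" "qlp$n < qp$n" "qp$n < qup$n"
    and Db: "DERIV (cb n) (qb$n) :> Db" and Dp: "DERIV (cp n) (qp$n) :> Dp"
  shows "real K * Db - real K * Dp = \<delta>$n"
proof -
  define g where "g t = real K * cb n (qb$n + t) + real K * cp n (qp$n - t) - \<delta>$n * (qb$n + t)" for t
  have "real K * (Db * 1) + real K * (Dp * - 1) - \<delta>$n * 1 = 0"
  proof (rule interior_min_deriv_zero[where g = g])
    have "DERIV (\<lambda>t. cb n (qb$n + t)) 0 :> Db * 1"
      by (rule DERIV_chain2[of "cb n"]) (use Db in \<open>auto intro!: derivative_eq_intros\<close>)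
    moreover have "DERIV (\<lambda>t. cp n (qp$n - t)) 0 :> Dp * - 1"
      by (rule DERIV_chain2[of "cp n"]) (use Dp in \<open>auto intro!: derivative_eq_intros\<close>)
    ultimately show "DERIV g 0 :> real K * (Db * 1) + real K * (Dp * - 1) - \<delta>$n * 1"
      unfolding g_def by (auto intro!: derivative_eq_intros)
    show "max (qlb$n - qb$n) (qp$n - qup$n) < 0" "0 < min (qub$n - qb$n) (qp$n - qlp$n)"
      using interior by auto
    fix y assume y: "max (qlb$n - qb$n) (qp$n - qup$n) \<le> y" "y \<le> min (qub$n - qb$n) (qp$n - qlp$n)"
    define a where "a = (\<chi> m. if m = n then qb$n + y else qb$m)"
    define b where "b = (\<chi> m. if m = n then qp$n - y else qp$m)"
    have ab: "a$m + b$m = qb$m + qp$m" for m unfolding a_def b_def by simp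
    then have "a + b = qb + qp" by (simp add: vec_eq_iff)
    moreover have "(qb, qp, 0) \<in> Omega H f qlb qub qlp qup D"
      using ed unfolding is_opt_def ed_feas_def by auto
    moreover have "qlb$m \<le> a$m \<and> a$m \<le> qub$m \<and> qlp$m \<le> b$m \<and> b$m \<le> qup$m" for m
      using calculation(2) y unfolding Omega_def a_def b_def by (cases "m = n") auto
    ultimately have "(a, b) \<in> ed_feas H f qlb qub qlp qup D"
      unfolding ed_feas_def Omega_def by (simp add: ab)
    then have "ed_obj K \<delta> cb cp (qb, qp) \<le> ed_obj K \<delta> cb cp (a, b)"
      using ed unfolding is_opt_def by auto
    moreover define \<phi> where "\<phi> m v = real K * cb m (fst v) + real K * cp m (snd v) - \<delta>$m * fst v" for m v
    have "ed_obj K \<delta> cb cp (a, b) = (\<Sum>m\<in>UNIV. \<phi> m (if m = n then (qb$n + y, qp$n - y) else (qb$m, qp$m)))"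
      unfolding ed_obj_def a_def b_def \<phi>_def prod.case by (rule sum.cong) auto
    also have "\<dots> = ed_obj K \<delta> cb cp (qb, qp) - \<phi> n (qb$n, qp$n) + \<phi> n (qb$n + y, qp$n - y)"
      by (subst sum_replace_term) (simp add: ed_obj_def \<phi>_def)
    ultimately show "g 0 \<le> g y" unfolding g_def \<phi>_def by simp
  qed
  then show ?thesis by simp
qed

lemma price_condition_at_interior_node:
  assumes dec: "ed_fr_decomposable H f qlb qub qlp qup K p cb cp d o1 \<delta>"
    and opt: "is_opt Feas Cost (qb, qp, r)"
    and interior: "qlb$n < qb$n" "qb$n < qub$n" "qlp$n < qp$n + r o1$n" "qp$n + r o1$n < qup$n"
  shows "\<delta>$n = (\<Sum>s\<in>UNIV. p s * (price s$n - price o1$n))"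
proof -
  have interior_p: "qlp$n < qp$n" "qp$n < qup$n" using interior sys_opt_feasible(1)[OF opt] by auto
  obtain Db where Db: "DERIV (cb n) (qb$n) :> Db" using C1_on_interval_DERIV[OF cb_C1 interior(1,2)] .
  obtain Dp where Dp: "DERIV (cp n) (qp$n) :> Dp" using C1_on_interval_DERIV[OF cp_C1 interior_p] .
  have "is_opt (ed_feas H f qlb qub qlp qup (d o1)) (ed_obj K \<delta> cb cp) (qb, qp)"
    using dec opt unfolding ed_fr_decomposable_def by blast
  from ed_opt_foc[OF this interior(1,2) interior_p Db Dp]
    sys_opt_dispatch_foc[OF opt interior(1,2) Db] sys_opt_regulation_foc[OF opt interior_p Dp]
  show ?thesis unfolding sum_price_diff_eq by simp
qed

end

theorem theorem1:
  fixes src dst :: "'l::finite \<Rightarrow> 'n::finite"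
    and B :: "'l \<Rightarrow> real"
    and f :: "real^'l"
    and K :: nat
    and \<kappa> :: "'s::finite \<Rightarrow> nat"
    and p :: "'s \<Rightarrow> real"
    and d :: "'s \<Rightarrow> real^'n"
    and o1 :: 's
    and qlb qub qlp qup :: "real^'n"
    and cb cp :: "'n \<Rightarrow> real \<Rightarrow> real"
    and lam :: "'s \<Rightarrow> real"
    and mul muu :: "'s \<Rightarrow> real^'l"
    and \<delta> :: "real^'n"
  defines "H \<equiv> ptdf src dst B"
  defines "\<pi> \<equiv> (\<lambda>s. nodal_price H (lam s) (mul s) (muu s))"
  assumes network: "connected_digraph src dst"
    and B_pos: "\<forall>l. B l > 0"
    and periods: "\<forall>s. \<kappa> s \<in> {1..K}"
    and prob_pos: "\<forall>s. p s > 0"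
    and prob_sum: "\<forall>k\<in>{1..K}. (\<Sum>s\<in>{s. \<kappa> s = k}. p s) = 1"
    and outcome1: "\<kappa> o1 = 1" "p o1 = 1"
    and cost_b: "\<forall>n. strict_convex_on {qlb$n..qub$n} (cb n) \<and> C1_on_interval (qlb$n) (qub$n) (cb n)
                     \<and> (\<forall>x\<in>{qlb$n..qub$n}. cb n x \<ge> 0)"
    and cost_p: "\<forall>n. strict_convex_on {qlp$n..qup$n} (cp n) \<and> C1_on_interval (qlp$n) (qup$n) (cp n)
                     \<and> (\<forall>x\<in>{qlp$n..qup$n}. cp n x \<ge> 0)"
    and feasible: "sys_feas H f qlb qub qlp qup d o1 \<noteq> {}"
    and multipliers: "sys_lagrange_mult H f qlb qub qlp qup p cb cp d o1 lam mul muu"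
  shows "((\<forall>n. \<delta>$n = (\<Sum>s\<in>UNIV. p s * (\<pi> s $ n - \<pi> o1 $ n)))
            \<longrightarrow> ed_fr_decomposable H f qlb qub qlp qup K p cb cp d o1 \<delta>)
       \<and> (ed_fr_decomposable H f qlb qub qlp qup K p cb cp d o1 \<delta>
            \<longrightarrow> (\<forall>qb qp r. is_opt (sys_feas H f qlb qub qlp qup d o1) (sys_obj p cb cp) (qb, qp, r)
                 \<longrightarrow> (\<forall>n. qlb$n < qb$n \<and> qb$n < qub$n \<and> qlp$n < qp$n + r o1$n \<and> qp$n + r o1$n < qup$n
                       \<longrightarrow> \<delta>$n = (\<Sum>s\<in>UNIV. p s * (\<pi> s $ n - \<pi> o1 $ n)))))"
proof -
  have "(\<Sum>s\<in>UNIV. p s) = (\<Sum>k\<in>{1..K}. \<Sum>s\<in>{s. \<kappa> s = k}. p s)"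
    using periods by (subst sum.group[symmetric, of _ _ \<kappa>]) (auto intro: sum.cong)
  also have "\<dots> = real K" using prob_sum by simp
  finally interpret ed_fr_model H f qlb qub qlp qup K p cb cp d o1 lam mul muu
    using prob_pos cost_b cost_p feasible multipliers by unfold_locales blast+
  have "\<pi> = price" unfolding \<pi>_def price_def by simp
  then show ?thesis
    using decomposable_if_price_condition price_condition_at_interior_node by blast
qed

end
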